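(* Let $g\colon(0,1)\to\mathbb{R}$ be a continuous, strictly increasing function such that $g(1-a)=-g(a)$ for all $a\in(0,1)$ and $\lim_{a\to0^+}g(a)=-\infty$, and let $J(a,b)=g^{-1}\bigl(g(a)-g(b)\bigr)$ for $(a,b)\in S=(0,1)\times(0,1)$. Suppose $J$ is differentiable on $S$. Then for any $0<c<1$, the level curve $\{(a,b)\in S : J(a,b)=c\}$ is the graph of the unique solution $b=b(a)$, $0<a<1$, of the differential equation \[ \frac{db}{da}=\frac{g'(a)}{g'(b)} \] that passes through the point $(c,\tfrac12)$. *)

theory Defs
  imports "HOL-Analysis.Analysis"
begin

end

theory Submission
  imports Defs
begin

text \<open>
  Since \<open>g (J (y, x)) = g y - g x\<close>, the map \<open>J (\<cdot>, x)\<close> is a \<open>g\<close>-translation sending \<open>x\<close> to \<open>1/2\<close>;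
  it is differentiable with positive derivative \<open>diag_slope x\<close>, its inverse being \<open>J (\<cdot>, 1 - x)\<close>.
  Hence the right Dini derivatives of \<open>g\<close> at \<open>x\<close> are those at \<open>1/2\<close> multiplied by \<open>diag_slope x\<close>.
  The upper one is finite (otherwise it would be infinite everywhere, which is impossible for a
  continuous function), so by Baire's theorem \<open>g\<close> is Lipschitz on some interval, where
  \<open>diag_slope\<close> is therefore bounded. Comparing with the supremum of \<open>diag_slope\<close> there shows that
  the lower and upper Dini derivatives at \<open>1/2\<close> coincide, and the symmetry \<open>g (1 - a) = - g a\<close>
  gives the left derivative too. Thus \<open>g\<close> is differentiable with \<open>g' = D \<cdot> diag_slope > 0\<close>,
  and then \<open>b a = J (a, c)\<close> solves the equation while \<open>g (y a) - g a\<close> is constant for every solution.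
\<close>

text \<open>
  \<open>frequently_steeper f x c\<close> holds if the upper right Dini derivative of \<open>f\<close> at \<open>x\<close> exceeds \<open>c\<close>
  and implies that it is at least \<open>c\<close>; \<open>frequently_flatter\<close> is the dual notion for the lower
  right Dini derivative.
\<close>

definition frequently_steeper :: "(real \<Rightarrow> real) \<Rightarrow> real \<Rightarrow> real \<Rightarrow> bool" where
  "frequently_steeper f x c \<longleftrightarrow> (\<exists>\<^sub>F y in at_right x. f y - f x > c * (y - x))"

definition frequently_flatter :: "(real \<Rightarrow> real) \<Rightarrow> real \<Rightarrow> real \<Rightarrow> bool" where
  "frequently_flatter f x c \<longleftrightarrow> (\<exists>\<^sub>F y in at_right x. f y - f x < c * (y - x))"

lemma frequently_flatter_iff_steeper_uminus:
  "frequently_flatter f x c \<longleftrightarrow> frequently_steeper (\<lambda>y. - f y) x (- c)"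
  by (simp add: frequently_flatter_def frequently_steeper_def algebra_simps)

lemma not_frequently_steeper:
  "\<not> frequently_steeper f x c \<longleftrightarrow> (\<forall>\<^sub>F y in at_right x. f y - f x \<le> c * (y - x))"
  by (simp add: frequently_steeper_def not_frequently not_less)

lemma not_frequently_flatter:
  "\<not> frequently_flatter f x c \<longleftrightarrow> (\<forall>\<^sub>F y in at_right x. f y - f x \<ge> c * (y - x))"
  by (simp add: frequently_flatter_def not_frequently not_less)

lemma frequently_steeper_mono:
  "c' \<le> c \<Longrightarrow> frequently_steeper f x c \<Longrightarrow> frequently_steeper f x c'"
  unfolding frequently_steeper_def
  by (rule frequently_mp[OF eventually_mono[OF eventually_at_right_less]])
     (auto intro: le_less_trans[OF mult_right_mono])

lemma frequently_flatter_imp_slope_le: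
  fixes f :: "real \<Rightarrow> real"
  assumes "a \<le> b" and cont: "continuous_on {a..b} f"
    and flat: "\<And>x. x \<in> {a..<b} \<Longrightarrow> frequently_flatter f x c"
  shows "f b - f a \<le> c * (b - a)"
proof (rule ccontr)
  \<comment> \<open>the last point where \<open>f x - c x\<close> is at most the mean of its end values cannot be
      followed by a flatter step, since that step would end at a later such point\<close>
  assume "\<not> f b - f a \<le> c * (b - a)"
  define F where "F x = f x - c * x" for x
  define L where "L = (F a + F b) / 2"
  define A where "A = {x \<in> {a..b}. F x \<le> L}"
  have Fab: "F a < F b" using \<open>\<not> _\<close> by (simp add: F_def algebra_simps)
  have "closed A" unfolding A_def F_def
    by (intro continuous_on_closed_Collect_le continuous_intros cont)
  moreover have "a \<in> A" "bdd_above A"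
    using \<open>a \<le> b\<close> Fab by (auto simp: A_def L_def intro: bdd_aboveI[of _ b])
  ultimately have "Sup A \<in> A" using closed_contains_Sup by blast
  define s where "s = Sup A"
  have "s \<noteq> b" using \<open>Sup A \<in> A\<close> Fab by (auto simp: A_def L_def s_def)
  then have "s \<in> {a..<b}" using \<open>Sup A \<in> A\<close> by (auto simp: A_def s_def)
  have "\<forall>\<^sub>F y in at_right s. s < y \<and> y < b"
    using \<open>s \<in> {a..<b}\<close> by (auto simp: eventually_at_right_field intro: exI[of _ b])
  with flat[OF \<open>s \<in> {a..<b}\<close>] obtain y where y: "f y - f s < c * (y - s)" "s < y" "y < b"
    unfolding frequently_flatter_def by (metis (mono_tags, lifting) frequently_eventually_frequently frequently_ex)
  then have "y \<in> A" using \<open>s \<in> {a..<b}\<close> \<open>Sup A \<in> A\<close>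
    by (auto simp: A_def F_def s_def algebra_simps)
  then show False using cSup_upper[OF _ \<open>bdd_above A\<close>] y(2) by (fastforce simp: s_def)
qed

lemma frequently_steeper_imp_slope_ge:
  fixes f :: "real \<Rightarrow> real"
  assumes "a \<le> b" and "continuous_on {a..b} f"
    and "\<And>x. x \<in> {a..<b} \<Longrightarrow> frequently_steeper f x c"
  shows "c * (b - a) \<le> f b - f a"
  using frequently_flatter_imp_slope_le[of a b "\<lambda>x. - f x" "- c"] assms
  by (simp add: frequently_flatter_iff_steeper_uminus continuous_on_minus)

lemma frequently_steeper_transport:
  fixes g T S :: "real \<Rightarrow> real"
  assumes T: "(T has_real_derivative \<tau>) (at x)"
    and S: "filterlim S (at_right x) (at_right (T x))" "\<forall>\<^sub>F z in at_right (T x). T (S z) = z"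
    and shift: "\<forall>\<^sub>F y in at_right x. g (T y) - g (T x) = g y - g x"
    and steep: "frequently_steeper g (T x) c" and "c' < c * \<tau>"
  shows "frequently_steeper g x c'"
proof -
  have "((\<lambda>y. (T y - T x) / (y - x)) \<longlongrightarrow> \<tau>) (at_right x)"
    using T unfolding has_field_derivative_iff by (rule tendsto_mono[OF at_le[OF subset_UNIV]])
  then have "((\<lambda>y. c * ((T y - T x) / (y - x))) \<longlongrightarrow> c * \<tau>) (at_right x)"
    by (rule tendsto_mult_left)
  then have "\<forall>\<^sub>F y in at_right x. c * ((T y - T x) / (y - x)) > c'"
    using \<open>c' < c * \<tau>\<close> by (rule order_tendstoD)
  then have near: "\<forall>\<^sub>F y in at_right x. c * (T y - T x) > c' * (y - x) \<and> g (T y) - g (T x) = g y - g x"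
    using eventually_at_right_less[of x] shift by eventually_elim (simp add: field_simps)
  have "\<forall>\<^sub>F z in at_right (T x).
      c * (T (S z) - T x) > c' * (S z - x) \<and> g (T (S z)) - g (T x) = g (S z) - g x \<and> T (S z) = z"
    using eventually_compose_filterlim[OF near S(1)] S(2) by eventually_elim auto
  from frequently_eventually_frequently[OF steep[unfolded frequently_steeper_def] this]
  have "\<exists>\<^sub>F z in at_right (T x). g (S z) - g x > c' * (S z - x)"
    by (rule frequently_elim1) force
  then show ?thesis
    using S(1) unfolding frequently_steeper_def filterlim_def frequently_def
    by (auto simp: eventually_filtermap dest: filter_leD)
qed

lemma frequently_flatter_transport:
  fixes g T S :: "real \<Rightarrow> real"
  assumes "(T has_real_derivative \<tau>) (at x)"
    and "filterlim S (at_right x) (at_right (T x))" "\<forall>\<^sub>F z in at_right (T x). T (S z) = z"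
    and "\<forall>\<^sub>F y in at_right x. g (T y) - g (T x) = g y - g x"
    and "frequently_flatter g (T x) c" and "c * \<tau> < c'"
  shows "frequently_flatter g x c'"
  unfolding frequently_flatter_iff_steeper_uminus
  by (rule frequently_steeper_transport[OF assms(1-3)])
     (use assms(4-6) in \<open>auto simp: frequently_flatter_iff_steeper_uminus elim: eventually_mono\<close>)

lemma not_frequently_steeper_if_flatter:
  fixes f :: "real \<Rightarrow> real"
  assumes "x < b" and cont: "continuous_on {x..b} f"
    and flat: "\<And>y. y \<in> {x..<b} \<Longrightarrow> frequently_flatter f y c"
  shows "\<not> frequently_steeper f x c"
  unfolding not_frequently_steeper
proof -
  have "\<forall>\<^sub>F y in at_right x. x < y \<and> y < b"
    using \<open>x < b\<close> by (auto simp: eventually_at_right_field intro: exI[of _ b])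
  then show "\<forall>\<^sub>F y in at_right x. f y - f x \<le> c * (y - x)"
  proof eventually_elim
    case (elim y)
    then show ?case
      by (intro frequently_flatter_imp_slope_le continuous_on_subset[OF cont] flat) auto
  qed
qed

lemma lipschitz_on_imp_not_frequently_steeper:
  fixes f :: "real \<Rightarrow> real"
  assumes lip: "L-lipschitz_on {a..b} f" and x: "x \<in> {a..<b}"
  shows "\<not> frequently_steeper f x L"
  unfolding not_frequently_steeper
proof -
  have "\<forall>\<^sub>F y in at_right x. x < y \<and> y < b"
    using x by (auto simp: eventually_at_right_field intro: exI[of _ b])
  then show "\<forall>\<^sub>F y in at_right x. f y - f x \<le> L * (y - x)"
  proof eventually_elim
    case (elim y)
    then have "dist (f y) (f x) \<le> L * dist y x" using x by (intro lipschitz_onD[OF lip]) auto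
    then show ?case using elim by (simp add: dist_real_def)
  qed
qed

lemma filterlim_at_right_strict_mono_on:
  fixes f :: "real \<Rightarrow> real"
  assumes "strict_mono_on A f" "open A" "y \<in> A" "isCont f y"
  shows "filterlim f (at_right (f y)) (at_right y)"
proof (rule tendsto_imp_filterlim_at_right)
  show "(f \<longlongrightarrow> f y) (at_right y)"
    using assms(4) unfolding isCont_def by (rule tendsto_mono[OF at_le[OF subset_UNIV]])
  have "\<forall>\<^sub>F z in at_right y. z \<in> A"
    using topological_tendstoD[OF tendsto_ident_at assms(2,3)] .
  then show "\<forall>\<^sub>F z in at_right y. f y < f z"
    using eventually_at_right_less[of y]
    by eventually_elim (use assms(1,3) in \<open>auto simp: strict_mono_on_def\<close>)
qed

lemma closed_right_slope_bounded:
  fixes f :: "real \<Rightarrow> real"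
  assumes "continuous_on {a..b + r} f"
  shows "closed {y \<in> {a..b}. \<forall>h\<in>{0<..r}. f (y + h) - f y \<le> L * h}"
proof -
  have "closed {y \<in> {a..b}. f (y + h) - f y \<le> L * h}" if "h \<in> {0<..r}" for h
  proof (rule continuous_on_closed_Collect_le)
    show "continuous_on {a..b} (\<lambda>y. f (y + h) - f y)"
      using that by (intro continuous_intros continuous_on_compose2[OF assms]
          continuous_on_subset[OF assms]) auto
  qed auto
  moreover have "{y \<in> {a..b}. \<forall>h\<in>{0<..r}. f (y + h) - f y \<le> L * h}
      = {a..b} \<inter> (\<Inter>h\<in>{0<..r}. {y \<in> {a..b}. f (y + h) - f y \<le> L * h})"
    by auto
  ultimately show ?thesis by (metis (no_types, lifting) closed_INT closed_Int closed_atLeastAtMost)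
qed

lemma closed_cover_interval_contains_interval:
  fixes a b :: real and C :: "nat \<Rightarrow> real set"
  assumes "a < b" and closed: "\<And>n. closed (C n)" and cover: "{a..b} \<subseteq> (\<Union>n. C n)"
  shows "\<exists>n \<alpha> \<beta>. a \<le> \<alpha> \<and> \<alpha> < \<beta> \<and> \<beta> \<le> b \<and> {\<alpha>..\<beta>} \<subseteq> C n"
proof -
  have "\<exists>n. \<not> {a..b} \<subseteq> closure ({a..b} - C n)"
  proof (rule ccontr)
    assume "\<nexists>n. \<not> {a..b} \<subseteq> closure ({a..b} - C n)"
    then have "{a..b} \<subseteq> closure (\<Inter>n. {a..b} - C n)"
      by (intro Baire) (auto simp: Diff_eq openin_open_Int open_Compl closed)
    moreover have "(\<Inter>n. {a..b} - C n) = {}" using cover by blast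
    ultimately have "{a..b} = {}" by (simp only: closure_empty subset_empty)
    with \<open>a < b\<close> show False by simp
  qed
  then obtain n y where "y \<in> {a..b}" "y \<notin> closure ({a..b} - C n)" by blast
  then obtain e where "e > 0" and e: "\<And>z. z \<in> {a..b} - C n \<Longrightarrow> e \<le> dist z y"
    unfolding closure_approachable by (auto simp: not_less)
  define r where "r = min (e / 2) ((b - a) / 2)"
  define \<alpha> where "\<alpha> = (if y + r \<le> b then y else y - r)"
  have r: "0 < r" "r < e" using \<open>e > 0\<close> \<open>a < b\<close> by (auto simp: r_def)
  have \<alpha>: "a \<le> \<alpha>" "\<alpha> + r \<le> b" "y \<in> {\<alpha>..\<alpha> + r}"
    using \<open>y \<in> {a..b}\<close> \<open>e > 0\<close> by (auto simp: \<alpha>_def r_def min_def field_simps)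
  have "{\<alpha>..\<alpha> + r} \<subseteq> C n"
  proof
    fix z assume "z \<in> {\<alpha>..\<alpha> + r}"
    then have "z \<in> {a..b}" "dist z y < e"
      using \<alpha> r by (auto simp: dist_real_def)
    then show "z \<in> C n" using e by force
  qed
  then show ?thesis using \<alpha> r by (intro exI[of _ n] exI[of _ \<alpha>] exI[of _ "\<alpha> + r"]) auto
qed

lemma has_real_derivative_from_right_if_odd:
  fixes f :: "real \<Rightarrow> real"
  assumes right: "((\<lambda>h. (f (x + h) - f x) / h) \<longlongrightarrow> D) (at_right 0)"
    and odd: "\<forall>\<^sub>F h in at_right 0. f (x - h) - f x = f x - f (x + h)"
  shows "(f has_real_derivative D) (at x)"
proof -
  let ?q = "\<lambda>h. (f (x + h) - f x) / h"
  have "\<forall>\<^sub>F h in at_right 0. ?q h = ?q (- h)"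
    using odd by eventually_elim (simp add: divide_minus_right diff_divide_distrib)
  then have "((\<lambda>h. ?q (- h)) \<longlongrightarrow> D) (at_right 0)"
    by (rule Lim_transform_eventually[OF right])
  then have "(?q \<longlongrightarrow> D) (at_left 0)"
    by (simp add: filterlim_at_left_to_right)
  then show ?thesis
    unfolding DERIV_def using right by (rule filterlim_split_at)
qed

locale symmetric_scale =
  fixes g :: "real \<Rightarrow> real" and J :: "real \<times> real \<Rightarrow> real"
  assumes g_cont: "continuous_on {0<..<1} g"
    and g_mono: "strict_mono_on {0<..<1} g"
    and g_sym: "\<forall>a\<in>{0<..<1}. g (1 - a) = - g a"
    and g_lim: "filterlim g at_bot (at_right 0)"
    and J_def: "J = (\<lambda>(a, b). inv_into {0<..<1} g (g a - g b))"
    and J_diff: "\<forall>p\<in>{0<..<1} \<times> {0<..<1}. J differentiable (at p)"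
begin

abbreviation I :: "real set" where "I \<equiv> {0<..<1}"

lemma g_less_iff: "x \<in> I \<Longrightarrow> y \<in> I \<Longrightarrow> g x < g y \<longleftrightarrow> x < y"
  using g_mono by (rule strict_mono_on_less)

lemma g_eq_iff: "x \<in> I \<Longrightarrow> y \<in> I \<Longrightarrow> g x = g y \<longleftrightarrow> x = y"
  using g_mono by (rule strict_mono_on_eq)

lemma g_half: "g (1/2) = 0"
  using g_sym by (auto dest: bspec[of _ _ "1/2"])

lemma g_surj: "g ` I = UNIV"
proof -
  have "s \<in> g ` I" for s
  proof -
    have "\<forall>\<^sub>F a in at_right 0. g a \<le> - \<bar>s\<bar>"
      using g_lim by (simp add: filterlim_at_bot)
    moreover have "\<forall>\<^sub>F a in at_right (0::real). a < 1/2"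
      by (rule order_tendstoD(2)[OF tendsto_ident_at]) simp
    ultimately have "\<forall>\<^sub>F a in at_right 0. g a \<le> - \<bar>s\<bar> \<and> 0 < a \<and> a < 1/2"
      using eventually_at_right_less[of 0] by eventually_elim auto
    then obtain a where a: "g a \<le> - \<bar>s\<bar>" "0 < a" "a < 1/2"
      using eventually_happens' trivial_limit_at_right_real by blast
    then have "g a \<le> s" "s \<le> g (1 - a)" using g_sym by auto
    moreover have "continuous_on {a..1 - a} g"
      using a by (intro continuous_on_subset[OF g_cont]) auto
    ultimately obtain x where "a \<le> x" "x \<le> 1 - a" "g x = s"
      using IVT'[of g a s "1 - a"] a by auto
    then show ?thesis using a by force
  qed
  then show ?thesis by blast
qed

lemma g_J: "g (J (a, b)) = g a - g b"
  by (simp add: J_def f_inv_into_f g_surj)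

lemma J_in: "J p \<in> I"
  unfolding J_def by (cases p) (metis UNIV_I case_prod_conv g_surj inv_into_into)

lemma J_eq_iff: "x \<in> I \<Longrightarrow> J (a, b) = x \<longleftrightarrow> g x = g a - g b"
  using g_eq_iff[OF J_in[of "(a, b)"], of x] by (auto simp: g_J)

lemma J_eq_iff_swap: "b \<in> I \<Longrightarrow> c \<in> I \<Longrightarrow> J (a, b) = c \<longleftrightarrow> J (a, c) = b"
  by (subst (1 2) J_eq_iff) auto

lemma J_self: "J (a, a) = 1/2"
  by (subst J_eq_iff) (simp_all add: g_half)

lemma g_J_reflect: "x \<in> I \<Longrightarrow> g (J (z, 1 - x)) = g z + g x"
  using g_sym by (simp add: g_J)

lemma J_J_reflect: "x \<in> I \<Longrightarrow> z \<in> I \<Longrightarrow> J (J (z, 1 - x), x) = z"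
  using g_sym by (simp add: J_eq_iff g_J)

lemma J_reflect_J: "x \<in> I \<Longrightarrow> y \<in> I \<Longrightarrow> J (J (y, x), 1 - x) = y"
  using g_sym by (simp add: J_eq_iff g_J)

lemma J_strict_mono_left: "strict_mono_on I (\<lambda>y. J (y, x))"
proof (rule strict_mono_onI)
  fix y z assume "y \<in> I" "z \<in> I" "y < z"
  then have "g (J (y, x)) < g (J (z, x))" by (simp add: g_J g_less_iff)
  then show "J (y, x) < J (z, x)" using J_in g_less_iff by blast
qed

lemma J_has_derivative_left:
  assumes "x \<in> I" "y \<in> I"
  shows "((\<lambda>y. J (y, x)) has_real_derivative deriv (\<lambda>y. J (y, x)) y) (at y)"
proof -
  have "(J \<circ> (\<lambda>y. (y, x))) differentiable (at y)"
    using assms J_diff by (intro differentiable_chain_at) auto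
  then show ?thesis by (simp add: o_def DERIV_deriv_iff_real_differentiable)
qed

lemma eventually_at_right_in_I: "y \<in> I \<Longrightarrow> \<forall>\<^sub>F z in at_right y. z \<in> I"
  using topological_tendstoD[OF tendsto_ident_at, of I y] by simp

definition diag_slope :: "real \<Rightarrow> real" where
  "diag_slope x = deriv (\<lambda>y. J (y, x)) x"

lemma has_derivative_diag_slope:
  "x \<in> I \<Longrightarrow> ((\<lambda>y. J (y, x)) has_real_derivative diag_slope x) (at x)"
  unfolding diag_slope_def by (rule J_has_derivative_left)

lemma diag_slope_pos_and_reflect_derivative:
  assumes x: "x \<in> I"
  shows "diag_slope x > 0"
    and "((\<lambda>z. J (z, 1 - x)) has_real_derivative 1 / diag_slope x) (at (1/2))"
proof -
  let ?T = "\<lambda>y. J (y, x)" and ?S = "\<lambda>z. J (z, 1 - x)"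
  define \<sigma> where "\<sigma> = deriv ?S (1/2)"
  have dS: "(?S has_real_derivative \<sigma>) (at (1/2))"
    unfolding \<sigma>_def using x by (intro J_has_derivative_left) auto
  have dTx: "(?T has_real_derivative diag_slope x) (at x)"
    using x by (rule has_derivative_diag_slope)
  moreover have "?S (1/2) = x" using x g_sym by (simp add: J_eq_iff g_J g_half)
  ultimately have dT: "(?T has_real_derivative diag_slope x) (at (?S (1/2)))" by simp
  have "(?T \<circ> ?S has_real_derivative diag_slope x * \<sigma>) (at (1/2))"
    using dT dS by (rule DERIV_chain)
  moreover have "(?T \<circ> ?S has_real_derivative 1) (at (1/2))"
    by (rule has_field_derivative_transform_within_open[OF DERIV_ident, of I])
       (use x in \<open>auto simp: J_J_reflect\<close>)
  ultimately have prod: "diag_slope x * \<sigma> = 1" by (rule DERIV_unique)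
  have "diag_slope x \<ge> 0" "\<sigma> \<ge> 0"
    using mono_on_imp_deriv_nonneg[OF strict_mono_on_imp_mono_on[OF J_strict_mono_left]] dTx dS x
    by (auto simp: interior_open)
  with prod show "diag_slope x > 0" by (metis less_eq_real_def mult_zero_left zero_neq_one)
  with prod have "\<sigma> = 1 / diag_slope x" by (simp add: field_simps)
  with dS show "(?S has_real_derivative 1 / diag_slope x) (at (1/2))" by simp
qed

lemma filterlim_J_left:
  assumes "x \<in> I" "y \<in> I"
  shows "filterlim (\<lambda>z. J (z, x)) (at_right (J (y, x))) (at_right y)"
  using J_strict_mono_left open_greaterThanLessThan assms(2)
    DERIV_isCont[OF J_has_derivative_left[OF assms]]
  by (rule filterlim_at_right_strict_mono_on)

lemma filterlim_J_to_half: "x \<in> I \<Longrightarrow> filterlim (\<lambda>y. J (y, x)) (at_right (1/2)) (at_right x)"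
  using filterlim_J_left[of x x] by (simp add: J_self)

lemma filterlim_J_reflect_from_half:
  assumes "x \<in> I" shows "filterlim (\<lambda>z. J (z, 1 - x)) (at_right x) (at_right (1/2))"
proof -
  have "J (1/2, 1 - x) = x" using J_reflect_J[OF assms assms] by (simp add: J_self)
  then show ?thesis using filterlim_J_left[of "1 - x" "1/2"] assms by simp
qed

lemma steeper_from_half:
  assumes x: "x \<in> I" and "frequently_steeper g (1/2) c" "c' < c * diag_slope x"
  shows "frequently_steeper g x c'"
proof (rule frequently_steeper_transport)
  show "((\<lambda>y. J (y, x)) has_real_derivative diag_slope x) (at x)"
    using x by (rule has_derivative_diag_slope)
  show "filterlim (\<lambda>z. J (z, 1 - x)) (at_right x) (at_right (J (x, x)))"
    using filterlim_J_reflect_from_half[OF x] by (simp add: J_self)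
  show "\<forall>\<^sub>F z in at_right (J (x, x)). J (J (z, 1 - x), x) = z"
    using eventually_at_right_in_I[of "1/2"] by (auto simp: J_self J_J_reflect[OF x] elim: eventually_mono)
qed (use assms in \<open>simp_all add: g_J J_self g_half\<close>)

lemma flatter_from_half:
  assumes x: "x \<in> I" and "frequently_flatter g (1/2) c" "c * diag_slope x < c'"
  shows "frequently_flatter g x c'"
proof (rule frequently_flatter_transport)
  show "((\<lambda>y. J (y, x)) has_real_derivative diag_slope x) (at x)"
    using x by (rule has_derivative_diag_slope)
  show "filterlim (\<lambda>z. J (z, 1 - x)) (at_right x) (at_right (J (x, x)))"
    using filterlim_J_reflect_from_half[OF x] by (simp add: J_self)
  show "\<forall>\<^sub>F z in at_right (J (x, x)). J (J (z, 1 - x), x) = z"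
    using eventually_at_right_in_I[of "1/2"] by (auto simp: J_self J_J_reflect[OF x] elim: eventually_mono)
qed (use assms in \<open>simp_all add: g_J J_self g_half\<close>)

lemma steeper_to_half:
  assumes x: "x \<in> I" and "frequently_steeper g x c" "c' < c * (1 / diag_slope x)"
  shows "frequently_steeper g (1/2) c'"
proof -
  have reflect_half: "J (1/2, 1 - x) = x" using J_reflect_J[OF x x] by (simp add: J_self)
  show ?thesis
  proof (rule frequently_steeper_transport[where T = "\<lambda>z. J (z, 1 - x)" and S = "\<lambda>y. J (y, x)"])
    show "((\<lambda>z. J (z, 1 - x)) has_real_derivative 1 / diag_slope x) (at (1/2))"
      using x by (rule diag_slope_pos_and_reflect_derivative)
    show "filterlim (\<lambda>y. J (y, x)) (at_right (1/2)) (at_right (J (1/2, 1 - x)))"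
      and "\<forall>\<^sub>F y in at_right (J (1/2, 1 - x)). J (J (y, x), 1 - x) = y"
      and "frequently_steeper g (J (1/2, 1 - x)) c"
      using filterlim_J_to_half[OF x] eventually_at_right_in_I[OF x] assms(2)
      by (auto simp: reflect_half J_reflect_J[OF x] elim: eventually_mono)
    show "\<forall>\<^sub>F z in at_right (1/2). g (J (z, 1 - x)) - g (J (1/2, 1 - x)) = g z - g (1/2)"
      using x by (simp add: g_J_reflect g_half)
  qed (use assms in simp)
qed

lemma upper_dini_half_finite: "\<exists>C. \<not> frequently_steeper g (1/2) C"
proof (rule ccontr)
  assume "\<nexists>C. \<not> frequently_steeper g (1/2) C"
  then have steep: "frequently_steeper g x C" if "x \<in> I" for x C
    using steeper_from_half[OF that, of "C / diag_slope x + 1" C]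
      diag_slope_pos_and_reflect_derivative(1)[OF that]
    by (simp add: field_simps)
  have "C * (3/4 - 1/4) \<le> g (3/4) - g (1/4)" for C
    by (rule frequently_steeper_imp_slope_ge) (auto intro: continuous_on_subset[OF g_cont] steep)
  from this[of "2 * (g (3/4) - g (1/4)) + 2"] show False by simp
qed

lemma upper_dini_finite:
  assumes x: "x \<in> I" shows "\<exists>C. \<not> frequently_steeper g x C"
proof (rule ccontr)
  obtain C where C: "\<not> frequently_steeper g (1/2) C" using upper_dini_half_finite by blast
  assume "\<nexists>C. \<not> frequently_steeper g x C"
  then have "frequently_steeper g (1/2) C"
    using steeper_to_half[OF x, of "(C + 1) * diag_slope x" C]
      diag_slope_pos_and_reflect_derivative(1)[OF x]
    by simp
  with C show False by contradiction
qed

lemma uniform_right_slope_bound: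
  assumes y: "y \<in> I"
  obtains N0 where "\<And>N h. N0 \<le> N \<Longrightarrow> 0 < h \<Longrightarrow> h \<le> 1 / N \<Longrightarrow> g (y + h) - g y \<le> N * h"
proof -
  obtain K where "\<not> frequently_steeper g y K" using upper_dini_finite[OF y] by blast
  then obtain b where "b > y" and b: "\<And>z. y < z \<Longrightarrow> z < b \<Longrightarrow> g z - g y \<le> K * (z - y)"
    by (auto simp: not_frequently_steeper eventually_at_right_field)
  show ?thesis
  proof
    fix N h :: real
    assume N: "max K (1 / (b - y)) + 1 \<le> N" and h: "0 < h" "h \<le> 1 / N"
    have "1 / (b - y) \<le> max K (1 / (b - y))" by simp
    with N have inv_lt: "1 / (b - y) < N" by linarith
    moreover have "0 < 1 / (b - y)" using \<open>b > y\<close> by simp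
    ultimately have "0 < N" by linarith
    with inv_lt have "1 / N < b - y" using \<open>b > y\<close> by (simp add: field_simps)
    then have "g (y + h) - g y \<le> K * h" using b[of "y + h"] h by simp
    also have "\<dots> \<le> N * h" using N h by (intro mult_right_mono) auto
    finally show "g (y + h) - g y \<le> N * h" .
  qed
qed

lemma lipschitz_on_some_interval: "\<exists>\<alpha> \<beta> L. 0 < \<alpha> \<and> \<alpha> < \<beta> \<and> \<beta> < 1 \<and> L-lipschitz_on {\<alpha>..\<beta>} g"
proof -
  define N where "N n = real n + 5" for n :: nat
  define C where "C n = {y \<in> {1/4..3/4}. \<forall>h\<in>{0<..1 / N n}. g (y + h) - g y \<le> N n * h}" for n
  have "closed (C n)" for n
  proof -
    have "1 / N n \<le> 1/5" by (simp add: N_def field_simps)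
    then have "{1/4..3/4 + 1 / N n} \<subseteq> I" by auto
    then show ?thesis
      unfolding C_def by (intro closed_right_slope_bounded continuous_on_subset[OF g_cont])
  qed
  moreover have "{1/4..3/4} \<subseteq> (\<Union>n. C n)"
  proof
    fix y :: real assume y: "y \<in> {1/4..3/4}"
    then obtain N0 where N0: "\<And>N h. N0 \<le> N \<Longrightarrow> 0 < h \<Longrightarrow> h \<le> 1 / N \<Longrightarrow> g (y + h) - g y \<le> N * h"
      using uniform_right_slope_bound[of y] by force
    obtain n where "N0 \<le> real n" using real_arch_simple by blast
    then have "y \<in> C n" using y N0[of "N n"] by (auto simp: C_def N_def)
    then show "y \<in> (\<Union>n. C n)" by blast
  qed
  ultimately obtain n \<alpha> \<beta> where \<alpha>\<beta>: "1/4 \<le> \<alpha>" "\<alpha> < \<beta>" "\<beta> \<le> 3/4" "{\<alpha>..\<beta>} \<subseteq> C n"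
    using closed_cover_interval_contains_interval[of "1/4" "3/4" C] by auto
  \<comment> \<open>shrinking to length at most \<open>1 / N n\<close> turns the one-sided step bound into a Lipschitz bound\<close>
  define \<beta>' where "\<beta>' = min \<beta> (\<alpha> + 1 / N n)"
  have slope: "g v - g u \<le> N n * (v - u)" if "\<alpha> \<le> u" "u < v" "v \<le> \<beta>'" for u v
    using that \<alpha>\<beta>(4) subsetD[OF \<alpha>\<beta>(4), of u] unfolding C_def \<beta>'_def
    by (auto dest!: bspec[of _ _ "v - u"])
  have "(N n)-lipschitz_on {\<alpha>..\<beta>'} g"
  proof (rule lipschitz_onI)
    fix u v assume uv: "u \<in> {\<alpha>..\<beta>'}" "v \<in> {\<alpha>..\<beta>'}"
    moreover have "{\<alpha>..\<beta>'} \<subseteq> I" using \<alpha>\<beta> by (auto simp: \<beta>'_def)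
    ultimately have "u \<in> I" "v \<in> I" by auto
    then show "dist (g u) (g v) \<le> N n * dist u v"
      using uv slope[of u v] slope[of v u] g_less_iff[of u v] g_less_iff[of v u]
      by (cases u v rule: linorder_cases) (auto simp: dist_real_def abs_if)
  qed (simp add: N_def)
  moreover have "\<alpha> < \<beta>'" using \<alpha>\<beta> by (simp add: \<beta>'_def N_def)
  ultimately show ?thesis using \<alpha>\<beta> by (intro exI[of _ \<alpha>] exI[of _ \<beta>'] exI[of _ "N n"]) (auto simp: \<beta>'_def)
qed

lemma frequently_flatter_imp_pos:
  assumes x: "x \<in> I" and "frequently_flatter g x a" shows "a > 0"
proof -
  have "\<forall>\<^sub>F y in at_right x. x < y \<and> y \<in> I"
    using eventually_at_right_less eventually_at_right_in_I[OF x] by (rule eventually_conj)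
  with assms(2) obtain y where "g y - g x < a * (y - x)" "x < y" "y \<in> I"
    unfolding frequently_flatter_def
    by (metis (mono_tags, lifting) frequently_eventually_frequently frequently_ex)
  moreover have "g x < g y" using calculation x g_less_iff by blast
  ultimately have "0 < a * (y - x)" "0 < y - x" by simp_all
  then show ?thesis by (simp add: zero_less_mult_iff)
qed

lemma bdd_above_diag_slope_if_lipschitz:
  assumes steep: "frequently_steeper g (1/2) b" and "b > 0"
    and lip: "L-lipschitz_on {\<alpha>..\<beta>} g" and sub: "{\<alpha>..<\<beta>} \<subseteq> I"
  shows "bdd_above (diag_slope ` {\<alpha>..<\<beta>})"
proof -
  have "b * diag_slope x \<le> L" if x: "x \<in> {\<alpha>..<\<beta>}" for x
    using steeper_from_half[OF subsetD[OF sub x] steep, of L]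
      lipschitz_on_imp_not_frequently_steeper[OF lip x]
    by force
  then show ?thesis
    using \<open>b > 0\<close> by (intro bdd_aboveI2[of _ _ "L / b"]) (simp add: field_simps)
qed

lemma scaled_upper_le_if_scaled_lower_less:
  assumes flat: "frequently_flatter g (1/2) a" and steep: "frequently_steeper g (1/2) b"
    and x: "x \<in> I" and "x < \<beta>" "\<beta> < 1"
    and lower: "\<And>y. y \<in> {x..<\<beta>} \<Longrightarrow> a * diag_slope y < c"
  shows "b * diag_slope x \<le> c"
proof -
  have "frequently_flatter g y c" if "y \<in> {x..<\<beta>}" for y
    using flatter_from_half[OF _ flat lower[OF that]] that x \<open>\<beta> < 1\<close> by auto
  moreover have "continuous_on {x..\<beta>} g"
    using x \<open>\<beta> < 1\<close> by (intro continuous_on_subset[OF g_cont]) auto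
  ultimately have "\<not> frequently_steeper g x c"
    using \<open>x < \<beta>\<close> by (intro not_frequently_steeper_if_flatter)
  then show ?thesis using steeper_from_half[OF x steep, of c] by force
qed

text \<open>
  The lower and upper Dini derivatives at \<open>1/2\<close> agree: otherwise, on an interval where
  \<open>diag_slope\<close> has a finite supremum \<open>M\<close>, every slope between \<open>a M\<close> and \<open>b M\<close> bounds the
  transported lower derivative, hence (by Dini's monotonicity argument) also the transported
  upper derivative \<open>b \<cdot> diag_slope\<close>, which comes arbitrarily close to \<open>b M\<close>.
\<close>

lemma frequently_flatter_steeper_half_le:
  assumes flat: "frequently_flatter g (1/2) a" and steep: "frequently_steeper g (1/2) b"
  shows "b \<le> a"
proof (rule ccontr)
  assume "\<not> b \<le> a"
  moreover have "a > 0" using frequently_flatter_imp_pos[OF _ flat] by simp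
  ultimately have "b > 0" "a < b" by simp_all
  obtain \<alpha> \<beta> L where "0 < \<alpha>" "\<alpha> < \<beta>" "\<beta> < 1" and lip: "L-lipschitz_on {\<alpha>..\<beta>} g"
    using lipschitz_on_some_interval by blast
  define A where "A = {\<alpha>..<\<beta>}"
  have AI: "A \<subseteq> I" using \<open>0 < \<alpha>\<close> \<open>\<beta> < 1\<close> by (auto simp: A_def)
  have bdd: "bdd_above (diag_slope ` A)"
    unfolding A_def using steep \<open>b > 0\<close> lip AI[unfolded A_def] by (rule bdd_above_diag_slope_if_lipschitz)
  define M where "M = (SUP x\<in>A. diag_slope x)"
  have le_M: "diag_slope x \<le> M" if "x \<in> A" for x
    unfolding M_def using that bdd by (rule cSUP_upper)
  have "\<alpha> \<in> A" using \<open>\<alpha> < \<beta>\<close> by (simp add: A_def)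
  then have "M > 0"
    using le_M diag_slope_pos_and_reflect_derivative(1) AI by (meson less_le_trans subsetD)
  have "b * diag_slope x \<le> (a + b) / 2 * M" if x: "x \<in> A" for x
  proof (rule scaled_upper_le_if_scaled_lower_less[OF flat steep _ _ \<open>\<beta> < 1\<close>])
    show "x \<in> I" "x < \<beta>" using x AI by (auto simp: A_def)
    fix y assume "y \<in> {x..<\<beta>}"
    then have "a * diag_slope y \<le> a * M" using x le_M[of y] \<open>a > 0\<close> by (auto simp: A_def)
    also have "\<dots> < (a + b) / 2 * M" using \<open>a < b\<close> \<open>M > 0\<close> by (simp add: field_simps)
    finally show "a * diag_slope y < (a + b) / 2 * M" .
  qed
  then have "M \<le> (a + b) / 2 * M / b"
    unfolding M_def using \<open>\<alpha> \<in> A\<close> \<open>b > 0\<close> by (intro cSUP_least) (auto simp: field_simps mult.commute)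
  with \<open>a < b\<close> \<open>b > 0\<close> \<open>M > 0\<close> show False by (simp add: field_simps)
qed

lemma right_derivative_half: "\<exists>D. ((\<lambda>h. (g (1/2 + h) - g (1/2)) / h) \<longlongrightarrow> D) (at_right 0)"
proof -
  define Q where "Q = {c. frequently_steeper g (1/2) c}"
  obtain C where C: "\<not> frequently_steeper g (1/2) C" using upper_dini_half_finite by blast
  have "c < C" if "c \<in> Q" for c
    using that C frequently_steeper_mono[of C c] by (force simp: Q_def not_less)
  then have bdd: "bdd_above Q" by (meson bdd_aboveI less_imp_le)
  have "\<forall>\<^sub>F y in at_right (1/2). y \<in> I" by (rule eventually_at_right_in_I) simp
  then have "\<forall>\<^sub>F y in at_right (1/2). g y - g (1/2) > 0 * (y - 1/2)"
    using eventually_at_right_less[of "1/2"] by eventually_elim (simp add: g_less_iff)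
  then have "0 \<in> Q"
    unfolding Q_def frequently_steeper_def by (simp add: eventually_frequently)
  then have "Q \<noteq> {}" by blast
  show ?thesis
  proof (intro exI order_tendstoI)
    fix d assume "Sup Q < d"
    then have "(Sup Q + d) / 2 \<notin> Q" using cSup_upper[OF _ bdd] by fastforce
    then have "\<forall>\<^sub>F y in at_right (1/2). g y - g (1/2) \<le> (Sup Q + d) / 2 * (y - 1/2)"
      by (simp add: Q_def not_frequently_steeper)
    then have "\<forall>\<^sub>F h in at_right 0. (g (1/2 + h) - g (1/2)) / h \<le> (Sup Q + d) / 2"
      unfolding eventually_at_right_to_0[of _ "1/2"]
      using eventually_at_right_less[of 0] by eventually_elim (simp add: field_simps add.commute)
    moreover have "(Sup Q + d) / 2 < d" using \<open>Sup Q < d\<close> by simp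
    ultimately show "\<forall>\<^sub>F h in at_right 0. (g (1/2 + h) - g (1/2)) / h < d"
      by (metis (mono_tags, lifting) eventually_mono le_less_trans)
  next
    fix d assume "d < Sup Q"
    then obtain c where "c \<in> Q" "d < c" using less_cSup_iff[OF \<open>Q \<noteq> {}\<close> bdd] by blast
    then have "\<not> frequently_flatter g (1/2) ((d + c) / 2)"
      using frequently_flatter_steeper_half_le by (force simp: Q_def)
    then have "\<forall>\<^sub>F y in at_right (1/2). g y - g (1/2) \<ge> (d + c) / 2 * (y - 1/2)"
      by (simp add: not_frequently_flatter)
    then have "\<forall>\<^sub>F h in at_right 0. (g (1/2 + h) - g (1/2)) / h \<ge> (d + c) / 2"
      unfolding eventually_at_right_to_0[of _ "1/2"]
      using eventually_at_right_less[of 0] by eventually_elim (simp add: field_simps add.commute)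
    moreover have "d < (d + c) / 2" using \<open>d < c\<close> by simp
    ultimately show "\<forall>\<^sub>F h in at_right 0. d < (g (1/2 + h) - g (1/2)) / h"
      by (metis (mono_tags, lifting) eventually_mono less_le_trans)
  qed
qed

lemma has_derivative_half: "\<exists>D. (g has_real_derivative D) (at (1/2))"
proof -
  obtain D where "((\<lambda>h. (g (1/2 + h) - g (1/2)) / h) \<longlongrightarrow> D) (at_right 0)"
    using right_derivative_half by blast
  moreover have "\<forall>\<^sub>F h in at_right 0. g (1/2 - h) - g (1/2) = g (1/2) - g (1/2 + h)"
  proof -
    have "\<forall>\<^sub>F h in at_right (0::real). h < 1/2"
      by (rule order_tendstoD(2)[OF tendsto_ident_at]) simp
    then show ?thesis
      using eventually_at_right_less[of 0]
    proof eventually_elim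
      case (elim h)
      then have "g (1 - (1/2 + h)) = - g (1/2 + h)" by (intro g_sym[rule_format]) auto
      moreover have "1 - (1/2 + h) = 1/2 - h" by simp
      ultimately show ?case by (simp add: g_half)
    qed
  qed
  ultimately show ?thesis by (blast intro: has_real_derivative_from_right_if_odd)
qed

lemma has_derivative_diag_scaled:
  assumes "(g has_real_derivative D) (at (1/2))" "x \<in> I"
  shows "(g has_real_derivative D * diag_slope x) (at x)"
proof -
  have "(g \<circ> (\<lambda>y. J (y, x)) has_real_derivative D * diag_slope x) (at x)"
    using assms by (intro DERIV_chain has_derivative_diag_slope) (simp_all add: J_self)
  then have "((\<lambda>y. g (J (y, x)) + g x) has_real_derivative D * diag_slope x) (at x)"
    using DERIV_add[OF _ DERIV_const] by (force simp: o_def)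
  then show ?thesis by (simp add: g_J)
qed

lemma g_has_positive_derivative:
  "\<exists>D>0. \<forall>x\<in>I. (g has_real_derivative D * diag_slope x) (at x)"
proof -
  obtain D where D: "(g has_real_derivative D) (at (1/2))" using has_derivative_half by blast
  have "D \<ge> 0"
    using mono_on_imp_deriv_nonneg[OF strict_mono_on_imp_mono_on[OF g_mono] D]
    by (simp add: interior_open)
  moreover have "D \<noteq> 0"
  proof
    assume "D = 0"
    then have "g (1/4) = g (3/4)"
      using has_derivative_diag_scaled[OF D] by (intro DERIV_isconst3[of 0 1]) auto
    then show False using g_eq_iff[of "1/4" "3/4"] by simp
  qed
  ultimately have "D > 0" by simp
  then show ?thesis using has_derivative_diag_scaled[OF D] by blast
qed

lemma g_has_deriv: "x \<in> I \<Longrightarrow> (g has_real_derivative deriv g x) (at x)"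
  using g_has_positive_derivative DERIV_imp_deriv by metis

lemma deriv_g_pos: "x \<in> I \<Longrightarrow> deriv g x > 0"
  using g_has_positive_derivative diag_slope_pos_and_reflect_derivative(1) DERIV_imp_deriv
  by (metis mult_pos_pos)

lemma level_curve_has_derivative:
  assumes c: "c \<in> I" and a: "a \<in> I"
  shows "((\<lambda>a. J (a, c)) has_real_derivative deriv g a / deriv g (J (a, c))) (at a)"
proof -
  let ?b = "\<lambda>a. J (a, c)"
  have db: "(?b has_real_derivative deriv ?b a) (at a)"
    using c a by (rule J_has_derivative_left)
  have "(g \<circ> ?b has_real_derivative deriv g (?b a) * deriv ?b a) (at a)"
    using g_has_deriv[OF J_in] db by (rule DERIV_chain)
  moreover have "(g \<circ> ?b has_real_derivative deriv g a) (at a)"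
    using DERIV_diff[OF g_has_deriv[OF a] DERIV_const[of "g c"]] by (simp add: o_def g_J)
  ultimately have "deriv g (?b a) * deriv ?b a = deriv g a" by (rule DERIV_unique)
  moreover have "deriv g (?b a) > 0" using deriv_g_pos J_in by blast
  ultimately have "deriv ?b a = deriv g a / deriv g (?b a)" by (simp add: field_simps)
  with db show ?thesis by simp
qed

lemma level_curve_unique:
  assumes c: "c \<in> I" and y: "\<forall>a\<in>I. y a \<in> I" "y c = 1/2"
    "\<forall>a\<in>I. (y has_real_derivative deriv g a / deriv g (y a)) (at a)"
    and a: "a \<in> I"
  shows "y a = J (a, c)"
proof -
  have "((\<lambda>t. g (y t) - g t) has_real_derivative 0) (at t)" if t: "t \<in> I" for t
  proof -
    have "((\<lambda>t. g (y t) - g t) has_real_derivative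
        deriv g (y t) * (deriv g t / deriv g (y t)) - deriv g t) (at t)"
      using y t by (intro DERIV_diff DERIV_chain2[OF g_has_deriv] g_has_deriv) auto
    moreover have "deriv g (y t) > 0" using deriv_g_pos y t by blast
    ultimately show ?thesis by simp
  qed
  then have "g (y a) - g a = g (y c) - g c" by (intro DERIV_isconst3[of 0 1]) (use a c in auto)
  then have "J (a, c) = y a" using y a by (subst J_eq_iff) (auto simp: g_half)
  then show ?thesis by simp
qed

lemma level_set_eq_graph:
  assumes c: "c \<in> I" shows "{p \<in> I \<times> I. J p = c} = {(a, J (a, c)) | a. a \<in> I}"
proof (intro set_eqI iffI)
  fix p assume "p \<in> {p \<in> I \<times> I. J p = c}"
  then obtain a b where "p = (a, b)" "a \<in> I" "b \<in> I" "J (a, b) = c" by auto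
  then show "p \<in> {(a, J (a, c)) | a. a \<in> I}" using J_eq_iff_swap[of b c a] c by auto
next
  fix p assume "p \<in> {(a, J (a, c)) | a. a \<in> I}"
  then obtain a where "p = (a, J (a, c))" "a \<in> I" by auto
  then show "p \<in> {p \<in> I \<times> I. J p = c}" using J_eq_iff_swap[of "J (a, c)" c a] J_in c by auto
qed

end

theorem proposition5p9:
  fixes g :: "real \<Rightarrow> real" and J :: "real \<times> real \<Rightarrow> real" and c :: real
  assumes g_cont: "continuous_on {0<..<1} g"
    and g_mono: "strict_mono_on {0<..<1} g"
    and g_sym: "\<forall>a\<in>{0<..<1}. g (1 - a) = - g a"
    and g_lim: "filterlim g at_bot (at_right 0)"
    and J_def: "J = (\<lambda>(a, b). inv_into {0<..<1} g (g a - g b))"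
    and J_diff: "\<forall>p\<in>{0<..<1} \<times> {0<..<1}. J differentiable (at p)"
    and c: "0 < c" "c < 1"
  shows "\<exists>b :: real \<Rightarrow> real.
      (\<forall>a\<in>{0<..<1}. b a \<in> {0<..<1})
    \<and> b c = 1/2
    \<and> (\<forall>a\<in>{0<..<1}. (b has_real_derivative (deriv g a / deriv g (b a))) (at a))
    \<and> (\<forall>y :: real \<Rightarrow> real.
          (\<forall>a\<in>{0<..<1}. y a \<in> {0<..<1}) \<and> y c = 1/2
          \<and> (\<forall>a\<in>{0<..<1}. (y has_real_derivative (deriv g a / deriv g (y a))) (at a))
          \<longrightarrow> (\<forall>a\<in>{0<..<1}. y a = b a))
    \<and> {p \<in> {0<..<1} \<times> {0<..<1}. J p = c} = {(a, b a) | a. a \<in> {0<..<1}}"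
proof -
  interpret symmetric_scale g J
    using g_cont g_mono g_sym g_lim J_def J_diff by unfold_locales
  have "c \<in> I" using c by simp
  then show ?thesis
    using J_in J_self level_curve_has_derivative level_curve_unique level_set_eq_graph
    by (intro exI[of _ "\<lambda>a. J (a, c)"] conjI allI impI ballI) auto
qed

end
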